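(* Consider the fractionation problem with $N\ge 1$ fractions: minimize $Y_{N-1}^+$ over doses $d_0,\dots,d_{N-1}\ge 0$ subject to $\sum_{k=0}^{N-1}\mathrm{BED}_O(d_k)\le c$. Assume that $\phi(x)>0$ for all $x>0$. Then every optimal dose sequence satisfies the constraint with equality, i.e. $\sum_{k=0}^{N-1}\mathrm{BED}_O(d_k^* )=c$.
   Context: Model: Tumor parameters $\alpha_T>0$, $\beta_T>0$, $[\alpha/\beta]_T=\alpha_T/\beta_T$; organ-at-risk (OAR) parameter $[\alpha/\beta]_O>0$; sparing factor $0<\gamma<1$; OAR limit $c>0$. Define $\mathrm{BED}_T(d)=d\left(1+\frac{d}{[\alpha/\beta]_T}\right)$ and $\mathrm{BED}_O(d)=\gamma d\left(1+\frac{\gamma d}{[\alpha/\beta]_O}\right)$ for $d\ge0$. Tumor growth between doses follows $\frac{1}{x}\frac{dx}{dt}=\phi(x)$, where $\phi:(0,\infty)\to\mathbb{R}$ is continuous and non-increasing (standing assumption). Doses $d_0,\dots,d_{N-1}$ are delivered at times $0,1,\dots,N-1$ (days). Writing $Y=\ln(\text{number of tumor cells})/\alpha_T$, let $F$ be the map sending the value of $Y$ at time $t$ to its value at time $t+1$ under the growth ODE (no dose). With initial cell number $X_0>0$ and $Y_0^-=\ln(X_0)/\alpha_T$, the state evolves by $Y_0^+=Y_0^- -\mathrm{BED}_T(d_0)$, $Y_{i+1}^-=F(Y_i^+)$, $Y_{i+1}^+=Y_{i+1}^- - \mathrm{BED}_T(d_{i+1})$ for $i=0,\dots,N-2$. 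*)

theory Defs
  imports "HOL-Analysis.Analysis"
begin

definition BED_T :: "real \<Rightarrow> real \<Rightarrow> real" where
  "BED_T abT d = d * (1 + d / abT)"

definition BED_O :: "real \<Rightarrow> real \<Rightarrow> real \<Rightarrow> real" where
  "BED_O abO \<gamma> d = \<gamma> * d * (1 + \<gamma> * d / abO)"

definition growth_sol :: "(real \<Rightarrow> real) \<Rightarrow> real \<Rightarrow> (real \<Rightarrow> real) \<Rightarrow> bool" where
  "growth_sol \<phi> x0 x \<longleftrightarrow> x 0 = x0 \<and>
     (\<forall>t\<in>{0..1}. x t > 0 \<and> (x has_real_derivative (x t * \<phi> (x t))) (at t within {0..1}))"

text \<open>The one-day map F on Y = ln(cells)/alpha_T.\<close>
definition Fmap :: "real \<Rightarrow> (real \<Rightarrow> real) \<Rightarrow> real \<Rightarrow> real" where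
  "Fmap \<alpha>T \<phi> y = (THE z. \<exists>x. growth_sol \<phi> (exp (\<alpha>T * y)) x \<and> z = ln (x 1) / \<alpha>T)"

fun Yplus :: "real \<Rightarrow> real \<Rightarrow> (real \<Rightarrow> real) \<Rightarrow> real \<Rightarrow> (nat \<Rightarrow> real) \<Rightarrow> nat \<Rightarrow> real" where
  "Yplus \<alpha>T abT \<phi> X0 d 0 = ln X0 / \<alpha>T - BED_T abT (d 0)"
| "Yplus \<alpha>T abT \<phi> X0 d (Suc i) = Fmap \<alpha>T \<phi> (Yplus \<alpha>T abT \<phi> X0 d i) - BED_T abT (d (Suc i))"

definition feasible :: "real \<Rightarrow> real \<Rightarrow> real \<Rightarrow> nat \<Rightarrow> (nat \<Rightarrow> real) \<Rightarrow> bool" where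
  "feasible abO \<gamma> c N d \<longleftrightarrow> (\<forall>k<N. d k \<ge> 0) \<and> (\<Sum>k<N. BED_O abO \<gamma> (d k)) \<le> c"

definition optimal :: "real \<Rightarrow> real \<Rightarrow> (real \<Rightarrow> real) \<Rightarrow> real \<Rightarrow> real \<Rightarrow> real \<Rightarrow> real \<Rightarrow> nat \<Rightarrow> (nat \<Rightarrow> real) \<Rightarrow> bool" where
  "optimal \<alpha>T abT \<phi> X0 abO \<gamma> c N d \<longleftrightarrow> feasible abO \<gamma> c N d \<and>
     (\<forall>d'. feasible abO \<gamma> c N d' \<longrightarrow> Yplus \<alpha>T abT \<phi> X0 d (N - 1) \<le> Yplus \<alpha>T abT \<phi> X0 d' (N - 1))"

end

theory Submission
  imports Defs
begin

text \<open>If the OAR budget were not exhausted, the last dose could be raised a little while staying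
  feasible. Since Y_{N-1}^+ depends on the last dose d_{N-1} only through the summand
  -BED_T(d_{N-1}), which is strictly decreasing in the dose, this strictly lowers the objective,
  contradicting optimality.\<close>

lemma BED_T_strict_mono:
  assumes "abT > 0" "0 \<le> x" "x < y"
  shows "BED_T abT x < BED_T abT y"
proof -
  have "x * x / abT \<le> y * y / abT"
    using assms by (intro divide_right_mono mult_mono) auto
  then show ?thesis
    using assms unfolding BED_T_def by (simp add: algebra_simps add_divide_distrib)
qed

lemma isCont_BED_O: "isCont (BED_O abO \<gamma>) x"
  unfolding BED_O_def divide_inverse by (intro continuous_intros)

lemma exists_greater_below_of_continuous:
  fixes f :: "real \<Rightarrow> real"
  assumes "isCont f x" "f x < b"
  obtains y where "x < y" "f y < b"
proof -
  have "(f \<longlongrightarrow> f x) (at_right x)"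
    using assms(1) by (simp add: isCont_def filterlim_at_split)
  then have "\<forall>\<^sub>F y in at_right x. f y < b"
    using assms(2) by (rule order_tendstoD(2))
  then obtain u where "x < u" "\<And>y. x < y \<Longrightarrow> y < u \<Longrightarrow> f y < b"
    unfolding eventually_at_right_field by blast
  then show ?thesis
    using that[of "(x + u) / 2"] by auto
qed

lemma Yplus_cong:
  "(\<And>j. j \<le> i \<Longrightarrow> d j = d' j) \<Longrightarrow> Yplus \<alpha>T abT \<phi> X0 d i = Yplus \<alpha>T abT \<phi> X0 d' i"
  by (induction i) auto

lemma Yplus_fun_upd_last:
  "Yplus \<alpha>T abT \<phi> X0 (d(i := t)) i = Yplus \<alpha>T abT \<phi> X0 d i + BED_T abT (d i) - BED_T abT t"
proof (cases i)
  case (Suc k)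
  have "Yplus \<alpha>T abT \<phi> X0 (d(i := t)) k = Yplus \<alpha>T abT \<phi> X0 d k"
    by (rule Yplus_cong) (auto simp: Suc)
  then show ?thesis
    by (simp add: Suc)
qed simp

lemma feasible_raise_last_dose:
  assumes "feasible abO \<gamma> c (Suc m) d" "(\<Sum>k<Suc m. BED_O abO \<gamma> (d k)) < c"
  obtains t where "d m < t" "feasible abO \<gamma> c (Suc m) (d(m := t))"
proof -
  define S where "S = (\<Sum>k<m. BED_O abO \<gamma> (d k))"
  have "isCont (BED_O abO \<gamma>) (d m)"
    by (rule isCont_BED_O)
  moreover have "BED_O abO \<gamma> (d m) < c - S"
    using assms(2) by (simp add: S_def)
  ultimately obtain t where t: "d m < t" "BED_O abO \<gamma> t < c - S"
    by (rule exists_greater_below_of_continuous)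
  have "(\<Sum>k<Suc m. BED_O abO \<gamma> ((d(m := t)) k)) = S + BED_O abO \<gamma> t"
    by (simp add: S_def)
  with t assms(1) have "feasible abO \<gamma> c (Suc m) (d(m := t))"
    by (auto simp: feasible_def less_Suc_eq)
  with t show ?thesis
    using that by blast
qed

theorem lemma1:
  fixes \<alpha>T \<beta>T abO \<gamma> c X0 :: real and \<phi> :: "real \<Rightarrow> real" and N :: nat and d :: "nat \<Rightarrow> real"
  assumes "\<alpha>T > 0" and "\<beta>T > 0" and "abO > 0" and "0 < \<gamma>" and "\<gamma> < 1" and "c > 0"
    and "X0 > 0" and "N \<ge> 1"
    and "continuous_on {0<..} \<phi>"
    and "\<And>x y. 0 < x \<Longrightarrow> x \<le> y \<Longrightarrow> \<phi> y \<le> \<phi> x"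
    and "\<And>x. 0 < x \<Longrightarrow> \<phi> x > 0"
    and "optimal \<alpha>T (\<alpha>T / \<beta>T) \<phi> X0 abO \<gamma> c N d"
  shows "(\<Sum>k<N. BED_O abO \<gamma> (d k)) = c"
proof (rule ccontr)
  assume "(\<Sum>k<N. BED_O abO \<gamma> (d k)) \<noteq> c"
  obtain m where N: "N = Suc m"
    using \<open>N \<ge> 1\<close> by (cases N) auto
  have feas: "feasible abO \<gamma> c N d"
    using assms(12) by (simp add: optimal_def)
  with \<open>(\<Sum>k<N. BED_O abO \<gamma> (d k)) \<noteq> c\<close> have "(\<Sum>k<N. BED_O abO \<gamma> (d k)) < c"
    by (simp add: feasible_def)
  with feas obtain t where t: "d m < t" "feasible abO \<gamma> c N (d(m := t))"
    unfolding N by (rule feasible_raise_last_dose)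
  have "BED_T (\<alpha>T / \<beta>T) (d m) < BED_T (\<alpha>T / \<beta>T) t"
    using feas t(1) assms(1,2) by (intro BED_T_strict_mono) (auto simp: feasible_def N)
  then have "Yplus \<alpha>T (\<alpha>T / \<beta>T) \<phi> X0 (d(m := t)) m < Yplus \<alpha>T (\<alpha>T / \<beta>T) \<phi> X0 d m"
    by (simp add: Yplus_fun_upd_last)
  moreover have "Yplus \<alpha>T (\<alpha>T / \<beta>T) \<phi> X0 d m \<le> Yplus \<alpha>T (\<alpha>T / \<beta>T) \<phi> X0 (d(m := t)) m"
    using assms(12) t(2) by (simp add: optimal_def N)
  ultimately show False
    by simp
qed

end
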